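(* For every $z\in\mathbb{C}$ with $|z|>1$, $$\sum_{n=0}^{\infty}\frac{(-1)^{m_n}}{p_n(z)}=1-\frac1z .$$
   Context: For $n\ge0$ and $z\in\mathbb{C}$, $p_n(z)=\frac12\sum_{i=0}^{n}\left(1-(-1)^{\binom{n}{i}}\right)z^i$, i.e. the sum of $z^i$ over those $i\in\{0,\dots,n\}$ with $\binom{n}{i}$ odd. $(m_n)_{n\ge0}=0,1,1,0,1,0,0,1,\dots$ is the Thue–Morse sequence: $m_n\equiv s(n)\pmod 2$, where $s(n)$ is the number of $1$'s in the binary expansion of $n$. *)

theory Defs
  imports Complex_Main
begin

fun bitcount :: "nat \<Rightarrow> nat" where
  "bitcount n = (if n = 0 then 0 else n mod 2 + bitcount (n div 2))"

declare bitcount.simps[simp del]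

definition thue_morse :: "nat \<Rightarrow> nat" where
  "thue_morse n = bitcount n mod 2"

definition p :: "nat \<Rightarrow> complex \<Rightarrow> complex" where
  "p n z = (1/2) * (\<Sum>i=0..n. (1 - (-1) ^ (n choose i)) * z ^ i)"

end

theory Submission
  imports Defs
begin

text \<open>Modulo 2, Lucas' theorem gives p(2n, z) = p(n, z^2) and p(2n + 1, z) = (1 + z) p(n, z^2),
  while the Thue--Morse sequence satisfies m(2n) = m(n) and m(2n + 1) = 1 - m(n).  Hence the
  terms of indices 2n and 2n + 1 add up to z/(1 + z) times the n-th term at z^2, and the partial
  sum over n < 2^N telescopes to (1 - 1/z) / (1 - z^(-2^N)), which tends to 1 - 1/z.  The same
  splitting shows that the absolute partial sums over n < 2^N equal the product over k < N of
  1 + 1/|1 + z^(2^k)|, which stays bounded because |1 + z^(2^k)| >= 2^k (|z| - 1).  So the series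
  converges absolutely, and its sum is the limit of its partial sums along the subsequence 2^N.\<close>

lemma sum_lessThan_double:
  fixes f :: "nat \<Rightarrow> 'a::comm_monoid_add"
  shows "(\<Sum>i<2 * n. f i) = (\<Sum>i<n. f (2 * i) + f (Suc (2 * i)))"
  by (induction n) (simp_all add: add_ac)

lemma summableI_norm_subseq_bounded:
  fixes f :: "nat \<Rightarrow> 'a::banach" and r :: "nat \<Rightarrow> nat"
  assumes "strict_mono r" and "\<And>N. (\<Sum>n<r N. norm (f n)) \<le> B"
  shows "summable f"
proof (rule summable_norm_cancel, rule summableI_nonneg_bounded)
  fix M
  have "(\<Sum>n<M. norm (f n)) \<le> (\<Sum>n<r M. norm (f n))"
    using seq_suble [OF assms(1), of M] by (intro sum_mono2) auto
  also have "\<dots> \<le> B"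
    by (rule assms(2))
  finally show "(\<Sum>n<M. norm (f n)) \<le> B" .
qed simp

lemma summable_sums_subseq:
  fixes f :: "nat \<Rightarrow> 'a::{t2_space,comm_monoid_add}" and r :: "nat \<Rightarrow> nat"
  assumes "summable f" and "strict_mono r" and "(\<lambda>N. \<Sum>n<r N. f n) \<longlonglongrightarrow> l"
  shows "f sums l"
proof -
  have "(\<lambda>N. \<Sum>n<r N. f n) \<longlonglongrightarrow> suminf f"
    using LIMSEQ_subseq_LIMSEQ [OF summable_LIMSEQ [OF assms(1)] assms(2)] by (simp add: o_def)
  then have "suminf f = l"
    using assms(3) by (rule LIMSEQ_unique)
  then show ?thesis
    using summable_sums [OF assms(1)] by simp
qed

lemma norm_one_plus_power_ge:
  fixes z :: "'a::real_normed_div_algebra"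
  shows "real n * (norm z - 1) \<le> norm (1 + z ^ n)"
proof -
  have "1 + real n * (norm z - 1) \<le> norm z ^ n"
    using Bernoulli_inequality [of "norm z - 1" n] by simp
  also have "norm z ^ n \<le> norm (1 + z ^ n) + 1"
    using norm_triangle_ineq4 [of "1 + z ^ n" 1] by (simp add: norm_power)
  finally show ?thesis by simp
qed

lemma even_choose_Suc_Suc_iff:
  "even (Suc (Suc m) choose Suc (Suc k)) \<longleftrightarrow> even ((m choose k) + (m choose Suc (Suc k)))"
proof -
  have "Suc (Suc m) choose Suc (Suc k) = (m choose k) + (m choose Suc (Suc k)) + 2 * (m choose Suc k)"
    by simp
  then show ?thesis by (simp only:) simp
qed

lemma even_choose_double_iff: "even ((2 * n) choose (2 * k)) \<longleftrightarrow> even (n choose k)"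
  and even_choose_double_Suc: "even ((2 * n) choose Suc (2 * k))"
proof -
  have "(even ((2 * n) choose (2 * k)) \<longleftrightarrow> even (n choose k)) \<and> even ((2 * n) choose Suc (2 * k))"
  proof (induction n arbitrary: k)
    case 0
    then show ?case by (cases k) simp_all
  next
    case (Suc n)
    have even_index: "even ((2 * Suc n) choose (2 * k)) \<longleftrightarrow> even (Suc n choose k)"
    proof (cases k)
      case (Suc j)
      have "even ((2 * Suc n) choose (2 * k)) \<longleftrightarrow>
          even (((2 * n) choose (2 * j)) + ((2 * n) choose (2 * k)))"
        using even_choose_Suc_Suc_iff [of "2 * n" "2 * j"] Suc by simp
      then show ?thesis using Suc.IH [of j] Suc.IH [of k] Suc by simp
    qed simp
    have odd_index: "even ((2 * Suc n) choose Suc (2 * k))"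
    proof (cases k)
      case (Suc j)
      have "even ((2 * Suc n) choose Suc (2 * k)) \<longleftrightarrow>
          even (((2 * n) choose Suc (2 * j)) + ((2 * n) choose Suc (2 * k)))"
        using even_choose_Suc_Suc_iff [of "2 * n" "Suc (2 * j)"] Suc by simp
      then show ?thesis using Suc.IH [of j] Suc.IH [of k] by simp
    qed simp
    show ?case using even_index odd_index by blast
  qed
  then show "even ((2 * n) choose (2 * k)) \<longleftrightarrow> even (n choose k)" "even ((2 * n) choose Suc (2 * k))"
    by blast+
qed

lemma even_choose_Suc_double_iff: "even (Suc (2 * n) choose (2 * k)) \<longleftrightarrow> even (n choose k)"
proof (cases k)
  case (Suc j)
  then have "Suc (2 * n) choose (2 * k) = ((2 * n) choose Suc (2 * j)) + ((2 * n) choose (2 * k))"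
    by simp
  then show ?thesis using even_choose_double_Suc even_choose_double_iff by simp
qed simp

lemma even_choose_Suc_double_Suc_iff: "even (Suc (2 * n) choose Suc (2 * k)) \<longleftrightarrow> even (n choose k)"
  using even_choose_double_Suc [of n k] even_choose_double_iff [of n k] by simp

lemma p_eq_sum_odd_choose:
  assumes "n < M"
  shows "p n z = (\<Sum>i<M. if odd (n choose i) then z ^ i else 0)"
proof -
  have "p n z = (\<Sum>i=0..n. if odd (n choose i) then z ^ i else 0)"
    unfolding p_def sum_distrib_left by (intro sum.cong) (auto simp: minus_one_power_iff)
  also have "\<dots> = (\<Sum>i<M. if odd (n choose i) then z ^ i else 0)"
    using assms by (intro sum.mono_neutral_left) (auto simp: binomial_eq_0)
  finally show ?thesis .
qed

lemma p_0 [simp]: "p 0 z = 1"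
  by (simp add: p_def)

lemma p_double: "p (2 * n) z = p n (z\<^sup>2)"
proof -
  have "p (2 * n) z = (\<Sum>i<2 * Suc n. if odd ((2 * n) choose i) then z ^ i else 0)"
    by (rule p_eq_sum_odd_choose) simp
  also have "\<dots> = (\<Sum>i<Suc n. if odd (n choose i) then (z\<^sup>2) ^ i else 0)"
    unfolding sum_lessThan_double
    by (intro sum.cong refl) (simp add: even_choose_double_iff even_choose_double_Suc power_mult)
  also have "\<dots> = p n (z\<^sup>2)"
    by (rule p_eq_sum_odd_choose [symmetric]) simp
  finally show ?thesis .
qed

lemma p_Suc_double: "p (Suc (2 * n)) z = (1 + z) * p n (z\<^sup>2)"
proof -
  have "p (Suc (2 * n)) z = (\<Sum>i<2 * Suc n. if odd (Suc (2 * n) choose i) then z ^ i else 0)"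
    by (rule p_eq_sum_odd_choose) simp
  also have "\<dots> = (\<Sum>i<Suc n. (1 + z) * (if odd (n choose i) then (z\<^sup>2) ^ i else 0))"
    unfolding sum_lessThan_double
    by (intro sum.cong refl)
      (simp only: even_choose_Suc_double_iff even_choose_Suc_double_Suc_iff,
        simp add: power_mult distrib_right)
  also have "\<dots> = (1 + z) * p n (z\<^sup>2)"
    by (simp only: p_eq_sum_odd_choose [OF lessI] sum_distrib_left)
  finally show ?thesis .
qed

lemma bitcount_0 [simp]: "bitcount 0 = 0"
  by (simp add: bitcount.simps)

lemma bitcount_double: "bitcount (2 * n) = bitcount n"
  by (cases "n = 0") (simp_all add: bitcount.simps [of "2 * n"])

lemma bitcount_Suc_double: "bitcount (Suc (2 * n)) = Suc (bitcount n)"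
  by (simp add: bitcount.simps [of "Suc (2 * n)"])

lemma thue_morse_double: "thue_morse (2 * n) = thue_morse n"
  by (simp add: thue_morse_def bitcount_double)

lemma thue_morse_Suc_double: "thue_morse (Suc (2 * n)) = 1 - thue_morse n"
  unfolding thue_morse_def bitcount_Suc_double by presburger

definition thue_morse_term :: "complex \<Rightarrow> nat \<Rightarrow> complex" where
  "thue_morse_term z n = (-1) ^ thue_morse n / p n z"

text \<open>At \<open>z = -1\<close> both pair lemmas still hold, because \<open>1 / 0 = 0\<close> kills the odd term
  on the left and the factor \<open>1 / (1 + z)\<close> on the right.\<close>

lemma thue_morse_term_pair:
  "thue_morse_term z (2 * n) + thue_morse_term z (Suc (2 * n)) =
     (1 - 1 / (1 + z)) * thue_morse_term (z\<^sup>2) n"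
proof -
  have sign: "(-1::complex) ^ thue_morse (Suc (2 * n)) = - ((-1) ^ thue_morse n)"
    using thue_morse_Suc_double [of n] by (auto simp: thue_morse_def minus_one_power_iff)
  show ?thesis
    unfolding thue_morse_term_def p_double p_Suc_double thue_morse_double sign
    by (simp add: divide_inverse inverse_mult_distrib) (simp add: algebra_simps)
qed

lemma norm_thue_morse_term_pair:
  "norm (thue_morse_term z (2 * n)) + norm (thue_morse_term z (Suc (2 * n))) =
     (1 + 1 / norm (1 + z)) * norm (thue_morse_term (z\<^sup>2) n)"
  unfolding thue_morse_term_def p_double p_Suc_double
  by (simp add: norm_divide norm_mult norm_power norm_inverse divide_inverse inverse_mult_distrib)
    (simp add: algebra_simps)

lemma sum_thue_morse_term_pow2_Suc:
  "(\<Sum>n<2 ^ Suc N. thue_morse_term z n) = (1 - 1 / (1 + z)) * (\<Sum>n<2 ^ N. thue_morse_term (z\<^sup>2) n)"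
  by (simp add: sum_lessThan_double thue_morse_term_pair sum_distrib_left)

lemma sum_thue_morse_term_pow2:
  assumes "norm z > 1"
  shows "(\<Sum>n<2 ^ N. thue_morse_term z n) = (1 - 1 / z) / (1 - (1 / z) ^ 2 ^ N)"
  using assms
proof (induction N arbitrary: z)
  case 0
  then have "z \<noteq> 1" by auto
  then show ?case by (simp add: thue_morse_term_def thue_morse_def field_simps)
next
  case (Suc N)
  have "z \<noteq> 0" "1 + z \<noteq> 0"
    using Suc.prems by (auto simp: add_eq_0_iff)
  then have "1 - 1 / (1 + z) = z / (1 + z)" "1 - 1 / z\<^sup>2 = (z - 1) * (1 + z) / z\<^sup>2"
    "1 - 1 / z = (z - 1) / z"
    by (simp_all add: field_simps power2_eq_square)
  with \<open>z \<noteq> 0\<close> \<open>1 + z \<noteq> 0\<close>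
  have factor: "(1 - 1 / (1 + z)) * (1 - 1 / z\<^sup>2) = 1 - 1 / z"
    by (simp add: power2_eq_square)
  have "norm (z\<^sup>2) > 1"
    using Suc.prems by (simp add: norm_power one_less_power)
  then have "(\<Sum>n<2 ^ Suc N. thue_morse_term z n) =
      (1 - 1 / (1 + z)) * ((1 - 1 / z\<^sup>2) / (1 - (1 / z\<^sup>2) ^ 2 ^ N))"
    using sum_thue_morse_term_pow2_Suc Suc.IH by simp
  also have "(1 / z\<^sup>2) ^ 2 ^ N = (1 / z) ^ 2 ^ Suc N"
    by (simp add: power_mult [symmetric] power_divide mult.commute)
  finally show ?case by (simp add: factor)
qed

lemma sum_norm_thue_morse_term_pow2:
  "(\<Sum>n<2 ^ N. norm (thue_morse_term z n)) = (\<Prod>k<N. 1 + 1 / norm (1 + z ^ 2 ^ k))"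
proof (induction N arbitrary: z)
  case 0
  then show ?case by (simp add: thue_morse_term_def thue_morse_def)
next
  case (Suc N)
  have "(\<Sum>n<2 ^ Suc N. norm (thue_morse_term z n)) =
      (1 + 1 / norm (1 + z)) * (\<Sum>n<2 ^ N. norm (thue_morse_term (z\<^sup>2) n))"
    by (simp add: sum_lessThan_double norm_thue_morse_term_pair sum_distrib_left)
  also have "\<dots> = (1 + 1 / norm (1 + z)) * (\<Prod>k<N. 1 + 1 / norm (1 + z ^ 2 ^ Suc k))"
    by (simp add: Suc.IH power_mult [symmetric] mult.commute)
  finally show ?case
    by (simp only: prod.lessThan_Suc_shift) simp
qed

lemma sum_norm_thue_morse_term_pow2_le:
  assumes "norm z > 1"
  shows "(\<Sum>n<2 ^ N. norm (thue_morse_term z n)) \<le> exp (2 / (norm z - 1))"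
proof -
  have geometric: "(\<Sum>k<N. (1 / 2) ^ k) = 2 - 2 * (1 / 2 :: real) ^ N"
    by (induction N) simp_all
  have term_le: "1 / norm (1 + z ^ 2 ^ k) \<le> (1 / 2) ^ k / (norm z - 1)" for k
  proof -
    have "0 < 2 ^ k * (norm z - 1)"
      using assms by simp
    moreover have "2 ^ k * (norm z - 1) \<le> norm (1 + z ^ 2 ^ k)"
      using norm_one_plus_power_ge [of "2 ^ k" z] by simp
    ultimately show ?thesis
      by (simp add: frac_le power_one_over divide_divide_eq_left)
  qed
  have "(\<Sum>n<2 ^ N. norm (thue_morse_term z n)) = (\<Prod>k<N. 1 + 1 / norm (1 + z ^ 2 ^ k))"
    by (rule sum_norm_thue_morse_term_pow2)
  also have "\<dots> \<le> (\<Prod>k<N. exp (1 / norm (1 + z ^ 2 ^ k)))"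
    by (intro prod_mono) auto
  also have "\<dots> = exp (\<Sum>k<N. 1 / norm (1 + z ^ 2 ^ k))"
    by (simp add: exp_sum)
  also have "\<dots> \<le> exp (\<Sum>k<N. (1 / 2) ^ k / (norm z - 1))"
    using term_le by (intro exp_mono sum_mono) auto
  also have "(\<Sum>k<N. (1 / 2) ^ k / (norm z - 1)) = (2 - 2 * (1 / 2) ^ N) / (norm z - 1)"
    unfolding sum_divide_distrib [symmetric] geometric ..
  also have "\<dots> \<le> 2 / (norm z - 1)"
    using assms by (intro divide_right_mono) auto
  finally show ?thesis by simp
qed

theorem mainTheorem15:
  fixes z :: complex
  assumes "norm z > 1"
  shows "(\<lambda>n. (-1) ^ thue_morse n / p n z) sums (1 - 1 / z)"
proof -
  have pow2: "strict_mono (\<lambda>N::nat. 2 ^ N :: nat)"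
    by (rule strict_monoI) simp
  have "summable (thue_morse_term z)"
    using pow2 sum_norm_thue_morse_term_pow2_le [OF assms] by (rule summableI_norm_subseq_bounded)
  moreover have "norm (1 / z) < 1"
    using assms by (simp add: norm_divide divide_less_eq)
  then have "(\<lambda>N. (1 / z) ^ 2 ^ N) \<longlonglongrightarrow> 0"
    using LIMSEQ_subseq_LIMSEQ [OF LIMSEQ_power_zero pow2] by (simp add: o_def)
  then have "(\<lambda>N. (1 - 1 / z) / (1 - (1 / z) ^ 2 ^ N)) \<longlonglongrightarrow> (1 - 1 / z) / (1 - 0)"
    by (intro tendsto_intros) auto
  then have "(\<lambda>N. \<Sum>n<2 ^ N. thue_morse_term z n) \<longlonglongrightarrow> 1 - 1 / z"
    using assms by (simp add: sum_thue_morse_term_pow2)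
  ultimately have "thue_morse_term z sums (1 - 1 / z)"
    by (rule summable_sums_subseq [OF _ pow2])
  then show ?thesis
    by (simp add: thue_morse_term_def [abs_def])
qed

end
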